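(* Let $G$ be a connected Lie group with identity $e$ and consider a discrete-time linear control system on $G$ with control range $U\subset\mathbb{R}^m$ a compact neighborhood of $0$. Then for all $k,k_1,k_2\in\mathbb{N}$ and $g\in G$: (1) $\mathcal{R}_k=\mathcal{R}_{\le k}$; (2) if $k_1\le k_2$ then $\mathcal{R}_{k_1}\subset\mathcal{R}_{k_2}$; (3) $\mathcal{R}_k(g)=\mathcal{R}_k\, f_0^k(g)$; (4) $\mathcal{R}_{k_1+k_2}=\mathcal{R}_{k_1}f_0^{k_1}(\mathcal{R}_{k_2})=\mathcal{R}_{k_2}f_0^{k_2}(\mathcal{R}_{k_1})$; (5) for every control $u$, $\varphi(k,\mathcal{R}(g),u)\subset\mathcal{R}(g)$; (6) $e\in\mathrm{int}\,\mathcal{R}$ if and only if $\mathcal{R}$ is open.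
   Context: A discrete-time linear control system on $G$ is given by $f:G\times U\to G$, $f_u:=f(\cdot,u)$, such that $f_0$ is an automorphism of $G$ and $f_u(g)=f_u(e)\cdot f_0(g)$ for all $g\in G,u\in U$. Controls are $u=(u_i)_{i\in\mathbb{N}_0}\in U^{\mathbb{N}_0}$, solutions $\varphi(0,g,u)=g$, $\varphi(k,g,u)=f_{u_{k-1}}\circ\cdots\circ f_{u_0}(g)$. $\mathcal{R}_k(g)=\{\varphi(k,g,u):u\in U^{\mathbb{N}_0}\}$, $\mathcal{R}(g)=\bigcup_{k\in\mathbb{N}}\mathcal{R}_k(g)$, $\mathcal{R}_k=\mathcal{R}_k(e)$, $\mathcal{R}=\mathcal{R}(e)$, $\mathcal{R}_{\le k}=\bigcup_{t\le k}\mathcal{R}_t$. For sets $A,B\subset G$, $AB=\{ab:a\in A,b\in B\}$. *)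

theory Defs
  imports "HOL-Analysis.Analysis"
begin

text \<open>The group G is modelled as a type of class topological_group_add (a not
necessarily commutative topological group); the group product g h is written g + h,
the identity e is 0.  Controls take values in U, a subset of real^'m.\<close>

definition setmul :: "'g::plus set \<Rightarrow> 'g set \<Rightarrow> 'g set" where
  "setmul A B = {a + b | a b. a \<in> A \<and> b \<in> B}"

definition group_automorphism :: "('g::topological_group_add \<Rightarrow> 'g) \<Rightarrow> bool" where
  "group_automorphism h \<longleftrightarrow> bij h \<and> (\<forall>a b. h (a + b) = h a + h b)
     \<and> continuous_on UNIV h \<and> continuous_on UNIV (inv h)"

definition linear_control_system ::
  "('g::topological_group_add \<Rightarrow> 'u::topological_space \<Rightarrow> 'g) \<Rightarrow> 'u set \<Rightarrow> 'u \<Rightarrow> bool" where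
  "linear_control_system f U u0 \<longleftrightarrow> u0 \<in> U \<and>
     group_automorphism (\<lambda>g. f g u0) \<and>
     (\<forall>u\<in>U. \<forall>g. f g u = f 0 u + f g u0) \<and>
     continuous_on (UNIV \<times> U) (\<lambda>(g, u). f g u)"

fun phi :: "('g \<Rightarrow> 'u \<Rightarrow> 'g) \<Rightarrow> nat \<Rightarrow> 'g \<Rightarrow> (nat \<Rightarrow> 'u) \<Rightarrow> 'g" where
  "phi f 0 g u = g"
| "phi f (Suc k) g u = f (phi f k g u) (u k)"

definition reach_k :: "('g \<Rightarrow> 'u \<Rightarrow> 'g) \<Rightarrow> 'u set \<Rightarrow> nat \<Rightarrow> 'g \<Rightarrow> 'g set" where
  "reach_k f U k g = {phi f k g u | u. \<forall>i. u i \<in> U}"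

definition reach :: "('g \<Rightarrow> 'u \<Rightarrow> 'g) \<Rightarrow> 'u set \<Rightarrow> 'g \<Rightarrow> 'g set" where
  "reach f U g = (\<Union>k\<in>{1..}. reach_k f U k g)"

definition reach_le :: "('g::zero \<Rightarrow> 'u \<Rightarrow> 'g) \<Rightarrow> 'u set \<Rightarrow> nat \<Rightarrow> 'g set" where
  "reach_le f U k = (\<Union>t\<in>{1..k}. reach_k f U t 0)"

end

theory Submission
  imports Defs
begin

text \<open>Every admissible map \<open>f\<^sub>u = f\<^sub>u(e) \<cdot> f\<^sub>0\<close> is a left translation composed with the
automorphism \<open>f\<^sub>0\<close>; by induction, \<open>\<phi>(k, g, u) = \<phi>(k, e, u) \<cdot> f\<^sub>0\<^sup>k(g)\<close>. All algebraic
statements follow from this splitting together with the concatenation of controls, and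
\<open>e \<in> \<R>\<^sub>k\<close> (constant control \<open>0\<close>) gives the monotonicity in \<open>k\<close>. For the openness statement,
each \<open>\<phi>(k, \<cdot>, u)\<close> is an open map sending \<open>\<R>\<close> into \<open>\<R>\<close> and \<open>e\<close> to a given point of \<open>\<R>\<close>, so an
interior point \<open>e\<close> is transported to every point of \<open>\<R>\<close>. None of this uses connectedness or
local compactness of \<open>G\<close>, nor compactness of \<open>U\<close>.\<close>

lemma phi_add: "phi f (a + b) g u = phi f b (phi f a g u) (\<lambda>i. u (a + i))"
  by (induction b) auto

lemma phi_cong: "(\<And>i. i < k \<Longrightarrow> u i = v i) \<Longrightarrow> phi f k g u = phi f k g v"
  by (induction k) auto

lemma phi_concat:
  "phi f (a + b) g (\<lambda>i. if i < a then u i else v (i - a)) = phi f b (phi f a g u) v"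
proof -
  have "phi f a g (\<lambda>i. if i < a then u i else v (i - a)) = phi f a g u"
    by (rule phi_cong) simp
  then show ?thesis
    by (simp add: phi_add)
qed

lemma open_image_bij_continuous_inv:
  assumes "bij h" "continuous_on UNIV (inv h)" "open S"
  shows "open (h ` S)"
proof -
  have "h ` S = inv h -` S"
    using assms(1) by (simp add: bij_vimage_eq_inv_image bij_imp_bij_inv inv_inv_eq)
  then show ?thesis
    using assms(2,3) by (simp add: open_vimage)
qed

lemma open_left_translation:
  fixes a :: "'g::topological_group_add"
  assumes "open S"
  shows "open ((\<lambda>x. a + x) ` S)"
proof -
  have "(\<lambda>x. a + x) ` S = (\<lambda>x. - a + x) -` S"
  proof (intro equalityI subsetI)
    fix x assume "x \<in> (\<lambda>x. - a + x) -` S"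
    then show "x \<in> (\<lambda>x. a + x) ` S"
      by (auto intro: image_eqI[where x = "- a + x"] simp: add.assoc[symmetric])
  qed (auto simp: add.assoc[symmetric])
  then show ?thesis
    by (simp add: assms open_vimage continuous_intros)
qed

locale linear_system =
  fixes f :: "'g::topological_group_add \<Rightarrow> 'u::topological_space \<Rightarrow> 'g"
    and U :: "'u set"
    and u0 :: 'u
  assumes linear: "linear_control_system f U u0"
begin

abbreviation f0 :: "'g \<Rightarrow> 'g" where
  "f0 \<equiv> \<lambda>g. f g u0"

lemma u0_in_U: "u0 \<in> U"
  using linear unfolding linear_control_system_def by blast

lemma f0_automorphism: "group_automorphism f0"
  using linear unfolding linear_control_system_def by blast

text \<open>Neither this nor \<open>phi_decompose\<close> below may be used as a simp rule: both loop, as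
\<open>f0 g\<close> is itself \<open>f g u0\<close> and \<open>phi f k 0 u\<close> matches the left-hand side.\<close>

lemma f_decompose: "u \<in> U \<Longrightarrow> f g u = f 0 u + f0 g"
  using linear unfolding linear_control_system_def by blast

lemma f0_add: "f0 (a + b) = f0 a + f0 b"
  using f0_automorphism unfolding group_automorphism_def by simp

lemma f0_zero: "f0 0 = 0"
proof -
  have "f0 0 + f0 0 = f0 0 + 0"
    using f0_add[of 0 0] by simp
  then show ?thesis
    by (rule add_left_imp_eq)
qed

lemma f0_funpow_zero: "(f0 ^^ k) 0 = 0"
  by (induction k) (simp_all add: f0_zero)

lemma phi_decompose:
  assumes "\<forall>i. u i \<in> U"
  shows "phi f k g u = phi f k 0 u + (f0 ^^ k) g"
proof (induction k)
  case 0
  show ?case by simp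
next
  case (Suc k)
  have uk: "u k \<in> U"
    using assms by blast
  have "phi f (Suc k) g u = f 0 (u k) + f0 (phi f k 0 u + (f0 ^^ k) g)"
    using f_decompose[OF uk, of "phi f k g u"] Suc by simp
  also have "\<dots> = (f 0 (u k) + f0 (phi f k 0 u)) + (f0 ^^ Suc k) g"
    by (simp add: f0_add add.assoc)
  also have "\<dots> = phi f (Suc k) 0 u + (f0 ^^ Suc k) g"
    using f_decompose[OF uk, of "phi f k 0 u"] by simp
  finally show ?case .
qed

lemma zero_in_reach_k: "0 \<in> reach_k f U k 0"
proof -
  have "phi f k 0 (\<lambda>_. u0) = 0"
    by (induction k) (simp_all add: f0_zero)
  then show ?thesis
    unfolding reach_k_def using u0_in_U by force
qed

lemma reach_k_eq_setmul: "reach_k f U k g = setmul (reach_k f U k 0) {(f0 ^^ k) g}"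
  unfolding reach_k_def setmul_def by (auto simp: phi_decompose[of _ k g]) (metis phi_decompose)

lemma reach_k_add:
  "reach_k f U (a + b) 0 = setmul (reach_k f U b 0) ((f0 ^^ b) ` reach_k f U a 0)"
proof
  show "reach_k f U (a + b) 0 \<subseteq> setmul (reach_k f U b 0) ((f0 ^^ b) ` reach_k f U a 0)"
  proof
    fix x assume "x \<in> reach_k f U (a + b) 0"
    then obtain u where u: "\<forall>i. u i \<in> U" and x: "x = phi f (a + b) 0 u"
      unfolding reach_k_def by blast
    have "x = phi f b (phi f a 0 u) (\<lambda>i. u (a + i))"
      by (simp add: x phi_add)
    also have "\<dots> = phi f b 0 (\<lambda>i. u (a + i)) + (f0 ^^ b) (phi f a 0 u)"
      by (rule phi_decompose) (simp add: u)
    finally show "x \<in> setmul (reach_k f U b 0) ((f0 ^^ b) ` reach_k f U a 0)"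
      unfolding setmul_def reach_k_def using u by blast
  qed
next
  show "setmul (reach_k f U b 0) ((f0 ^^ b) ` reach_k f U a 0) \<subseteq> reach_k f U (a + b) 0"
  proof
    fix x assume "x \<in> setmul (reach_k f U b 0) ((f0 ^^ b) ` reach_k f U a 0)"
    then obtain u v where u: "\<forall>i. u i \<in> U" and v: "\<forall>i. v i \<in> U"
      and x: "x = phi f b 0 v + (f0 ^^ b) (phi f a 0 u)"
      unfolding setmul_def reach_k_def by blast
    define w where "w = (\<lambda>i. if i < a then u i else v (i - a))"
    have "phi f (a + b) 0 w = phi f b (phi f a 0 u) v"
      unfolding w_def by (rule phi_concat)
    also have "\<dots> = x"
      unfolding x by (rule phi_decompose[OF v])
    finally show "x \<in> reach_k f U (a + b) 0"
      unfolding reach_k_def w_def using u v by force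
  qed
qed

lemma reach_k_mono:
  assumes "k1 \<le> k2"
  shows "reach_k f U k1 0 \<subseteq> reach_k f U k2 0"
proof
  fix x assume x: "x \<in> reach_k f U k1 0"
  have "0 \<in> (f0 ^^ k1) ` reach_k f U (k2 - k1) 0"
    using zero_in_reach_k f0_funpow_zero by (metis image_eqI)
  then have "x + 0 \<in> setmul (reach_k f U k1 0) ((f0 ^^ k1) ` reach_k f U (k2 - k1) 0)"
    unfolding setmul_def using x by blast
  then show "x \<in> reach_k f U k2 0"
    using assms by (simp flip: reach_k_add)
qed

lemma reach_le_eq_reach_k:
  assumes "1 \<le> k"
  shows "reach_le f U k = reach_k f U k 0"
  unfolding reach_le_def using assms reach_k_mono by fastforce

lemma phi_image_reach_subset:
  assumes u: "\<forall>i. u i \<in> U"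
  shows "(\<lambda>x. phi f k x u) ` reach f U g \<subseteq> reach f U g"
proof
  fix y assume "y \<in> (\<lambda>x. phi f k x u) ` reach f U g"
  then obtain j v where j: "1 \<le> j" and v: "\<forall>i. v i \<in> U" and y: "y = phi f k (phi f j g v) u"
    unfolding reach_def reach_k_def by blast
  define w where "w = (\<lambda>i. if i < j then v i else u (i - j))"
  have "y = phi f (j + k) g w"
    unfolding y w_def by (rule phi_concat[symmetric])
  moreover have "\<forall>i. w i \<in> U"
    using u v by (simp add: w_def)
  ultimately have "y \<in> reach_k f U (j + k) g"
    unfolding reach_k_def by blast
  then show "y \<in> reach f U g"
    unfolding reach_def using j by force
qed

lemma open_image_f:
  assumes "u \<in> U" "open S"
  shows "open ((\<lambda>g. f g u) ` S)"
proof -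
  have "(\<lambda>g. f g u) = (\<lambda>x. f 0 u + x) \<circ> f0"
    by (intro ext, unfold o_apply, rule f_decompose[OF assms(1)])
  then have "(\<lambda>g. f g u) ` S = (\<lambda>x. f 0 u + x) ` f0 ` S"
    by (simp only: image_comp)
  moreover have "open (f0 ` S)"
    using f0_automorphism assms(2) unfolding group_automorphism_def
    by (blast intro: open_image_bij_continuous_inv)
  ultimately show ?thesis
    by (simp add: open_left_translation)
qed

lemma open_image_phi:
  assumes "\<forall>i. u i \<in> U" "open S"
  shows "open ((\<lambda>g. phi f k g u) ` S)"
proof (induction k)
  case 0
  then show ?case using assms(2) by simp
next
  case (Suc k)
  have "(\<lambda>g. phi f (Suc k) g u) ` S = (\<lambda>g. f g (u k)) ` (\<lambda>g. phi f k g u) ` S"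
    by (simp add: image_image)
  then show ?case
    using Suc assms(1) by (simp add: open_image_f)
qed

lemma zero_in_interior_reach_iff_open:
  "0 \<in> interior (reach f U 0) \<longleftrightarrow> open (reach f U 0)"
proof
  assume "open (reach f U 0)"
  moreover have "0 \<in> reach f U 0"
    unfolding reach_def using zero_in_reach_k[of 1] by force
  ultimately show "0 \<in> interior (reach f U 0)"
    by (simp add: interior_open)
next
  assume zero_interior: "0 \<in> interior (reach f U 0)"
  have "x \<in> interior (reach f U 0)" if "x \<in> reach f U 0" for x
  proof -
    obtain k u where u: "\<forall>i. u i \<in> U" and x: "x = phi f k 0 u"
      using \<open>x \<in> reach f U 0\<close> unfolding reach_def reach_k_def by blast
    let ?V = "(\<lambda>g. phi f k g u) ` interior (reach f U 0)"
    have "x \<in> ?V"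
      using zero_interior x by blast
    moreover have "open ?V"
      using u by (simp add: open_image_phi)
    moreover have "?V \<subseteq> reach f U 0"
      using phi_image_reach_subset[OF u] interior_subset by blast
    ultimately show ?thesis
      by (meson interior_maximal interior_subset subsetD)
  qed
  then show "open (reach f U 0)"
    by (metis interior_subset interior_eq subsetI subset_antisym)
qed

end

theorem proposition2p12:
  fixes f :: "'g::{topological_group_add, t2_space, second_countable_topology}
                 \<Rightarrow> real^'m \<Rightarrow> 'g"
    and U :: "(real^'m) set"
  assumes G_connected: "connected (UNIV :: 'g set)"
    and G_locally_compact: "locally compact (UNIV :: 'g set)"
    and U_compact: "compact U"
    and U_nbhd: "0 \<in> interior U"
    and sys: "linear_control_system f U 0"
  shows
    "(\<forall>k\<ge>1. reach_k f U k 0 = reach_le f U k)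
   \<and> (\<forall>k1 k2. 1 \<le> k1 \<longrightarrow> k1 \<le> k2 \<longrightarrow> reach_k f U k1 0 \<subseteq> reach_k f U k2 0)
   \<and> (\<forall>k\<ge>1. \<forall>g. reach_k f U k g = setmul (reach_k f U k 0) {((\<lambda>x. f x 0) ^^ k) g})
   \<and> (\<forall>k1\<ge>1. \<forall>k2\<ge>1.
        reach_k f U (k1 + k2) 0
          = setmul (reach_k f U k1 0) (((\<lambda>x. f x 0) ^^ k1) ` reach_k f U k2 0)
      \<and> reach_k f U (k1 + k2) 0
          = setmul (reach_k f U k2 0) (((\<lambda>x. f x 0) ^^ k2) ` reach_k f U k1 0))
   \<and> (\<forall>k\<ge>1. \<forall>g. \<forall>u. (\<forall>i. u i \<in> U) \<longrightarrow>
        (\<lambda>x. phi f k x u) ` reach f U g \<subseteq> reach f U g)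
   \<and> ((0::'g) \<in> interior (reach f U 0) \<longleftrightarrow> open (reach f U 0))"
proof -
  interpret linear_system f U 0
    using sys by unfold_locales
  show ?thesis
  proof (intro conjI allI impI)
    show "reach_k f U k 0 = reach_le f U k" if "1 \<le> k" for k
      using reach_le_eq_reach_k[OF that] by (rule sym)
    show "reach_k f U k1 0 \<subseteq> reach_k f U k2 0" if "1 \<le> k1" "k1 \<le> k2" for k1 k2
      using that(2) by (rule reach_k_mono)
    show "reach_k f U k g = setmul (reach_k f U k 0) {((\<lambda>x. f x 0) ^^ k) g}" for k g
      by (rule reach_k_eq_setmul)
    show "reach_k f U (k1 + k2) 0
        = setmul (reach_k f U k1 0) (((\<lambda>x. f x 0) ^^ k1) ` reach_k f U k2 0)" for k1 k2
      using reach_k_add[of k2 k1] by (simp only: add.commute)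
    show "reach_k f U (k1 + k2) 0
        = setmul (reach_k f U k2 0) (((\<lambda>x. f x 0) ^^ k2) ` reach_k f U k1 0)" for k1 k2
      by (rule reach_k_add)
    show "(\<lambda>x. phi f k x u) ` reach f U g \<subseteq> reach f U g" if "\<forall>i. u i \<in> U" for k g u
      using that by (rule phi_image_reach_subset)
  qed (rule zero_in_interior_reach_iff_open)
qed

end
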